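(* Let $q$ be a prime with $q \equiv 3 \pmod 4$, and let $C_1 > \sqrt[4]{2}$. Suppose $E \subset \mathbb{F}_q^2$ satisfies $|E| > C_1 q^{7/4}$. Then there exists $C_2 > 0$ depending only on $C_1$ such that $|T_2(E)| \ge C_2 q^3$, where $T_2(E)$ is the set of congruence classes of triangles determined by $E$.
   Context: For $x=(x_1,x_2), y=(y_1,y_2) \in \mathbb{F}_q^2$ the "distance" is $\|x-y\| = (x_1-y_1)^2+(x_2-y_2)^2 \in \mathbb{F}_q$. A triangle determined by $E$ is a triple $(x^1,x^2,x^3)$ of points of $E$. Two triples $(x^1,x^2,x^3)$ and $(y^1,y^2,y^3)$ of points of $\mathbb{F}_q^2$ are congruent if there exist $\theta \in O_2(\mathbb{F}_q)$ (the group of $2\times 2$ matrices $A$ over $\mathbb{F}_q$ with $A^TA=I$) and $\tau \in \mathbb{F}_q^2$ such that $y^j = \theta x^j + \tau$ for $j=1,2,3$. $T_2(E)$ is the set of congruence classes (among all triples in $\mathbb{F}_q^2$) containing at least one triangle with vertices in $E$. *)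

theory Defs
  imports Complex_Main "HOL-Computational_Algebra.Primes"
begin

text \<open>The prime field F_q is modelled by the residues {0..q-1} (as integers) with
  arithmetic mod q.  Points of F_q^2 are pairs of residues.\<close>

definition Fq :: "nat \<Rightarrow> int set" where
  "Fq q = {0..<int q}"

definition plane :: "nat \<Rightarrow> (int \<times> int) set" where
  "plane q = Fq q \<times> Fq q"

definition fdist :: "nat \<Rightarrow> int \<times> int \<Rightarrow> int \<times> int \<Rightarrow> int" where
  "fdist q x y = ((fst x - fst y)^2 + (snd x - snd y)^2) mod int q"

text \<open>O_2(F_q): matrices A = [[a,b],[c,d]] over F_q with A^T A = I.\<close>
definition O2 :: "nat \<Rightarrow> (int \<times> int \<times> int \<times> int) set" where
  "O2 q = {(a,b,c,d). a \<in> Fq q \<and> b \<in> Fq q \<and> c \<in> Fq q \<and> d \<in> Fq q \<and>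
      (a*a + c*c) mod int q = 1 mod int q \<and>
      (b*b + d*d) mod int q = 1 mod int q \<and>
      (a*b + c*d) mod int q = 0}"

definition rigid_app :: "nat \<Rightarrow> int \<times> int \<times> int \<times> int \<Rightarrow> int \<times> int \<Rightarrow> int \<times> int \<Rightarrow> int \<times> int" where
  "rigid_app q \<theta> \<tau> x = (case \<theta> of (a,b,c,d) \<Rightarrow>
      ((a * fst x + b * snd x + fst \<tau>) mod int q, (c * fst x + d * snd x + snd \<tau>) mod int q))"

type_synonym tri = "(int \<times> int) \<times> (int \<times> int) \<times> (int \<times> int)"

definition triples :: "nat \<Rightarrow> tri set" where
  "triples q = plane q \<times> plane q \<times> plane q"

definition congruent :: "nat \<Rightarrow> tri \<Rightarrow> tri \<Rightarrow> bool" where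
  "congruent q s t \<longleftrightarrow> (\<exists>\<theta>\<in>O2 q. \<exists>\<tau>\<in>plane q.
      (case s of (x1,x2,x3) \<Rightarrow> case t of (y1,y2,y3) \<Rightarrow>
        y1 = rigid_app q \<theta> \<tau> x1 \<and> y2 = rigid_app q \<theta> \<tau> x2 \<and> y3 = rigid_app q \<theta> \<tau> x3))"

definition cong_class :: "nat \<Rightarrow> tri \<Rightarrow> tri set" where
  "cong_class q t = {s \<in> triples q. congruent q t s}"

definition T2 :: "nat \<Rightarrow> (int \<times> int) set \<Rightarrow> tri set set" where
  "T2 q E = {C \<in> cong_class q ` triples q. \<exists>t\<in>C. t \<in> E \<times> E \<times> E}"

end

theory Submission
  imports Defs "HOL-Number_Theory.Residues"
begin

text \<open>Count pairs of congruent triangles with vertices in \<open>E\<close>. By Cauchy--Schwarz over the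
  congruence classes, \<open>|E|\<^sup>6 \<le> |T\<^sub>2(E)| \<cdot> #{congruent pairs}\<close>, and a congruent pair
  \<open>(s, g s)\<close> is a rigid motion \<open>g\<close> together with a triangle in \<open>E \<inter> g\<^sup>-\<^sup>1 E\<close>, so there are at
  most \<open>\<Sum>\<^sub>g \<nu>(g)\<^sup>3\<close> of them, where \<open>\<nu>(g) = |E \<inter> g\<^sup>-\<^sup>1 E| \<le> |E|\<close>.
  For fixed rotation \<open>\<theta>\<close> the translates have mean overlap \<open>|E|\<^sup>2/q\<^sup>2\<close>, and Fourier analysis
  writes the variance \<open>\<Sum>\<^sub>\<tau> \<nu>\<^sup>2 - |E|\<^sup>4/q\<^sup>2\<close> as \<open>q\<^sup>-\<^sup>2 \<Sum>\<^sub>\<xi>\<^sub>\<noteq>\<^sub>0 |\<^bold>E(\<theta>\<^sup>T\<xi>)|\<^sup>2 |\<^bold>E(\<xi>)|\<^sup>2\<close> with \<open>\<^bold>E\<close>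
  the Fourier transform of \<open>E\<close>. Since \<open>q \<equiv> 3 (mod 4)\<close>, \<open>x\<^sup>2 + y\<^sup>2\<close> has no nontrivial zero, so a
  line meets the unit circle in at most two points; hence \<open>|O\<^sub>2| \<le> 4q\<close> and \<open>\<theta> \<mapsto> \<theta>\<^sup>T\<xi>\<close> is at most
  4-to-1 for \<open>\<xi> \<noteq> 0\<close>, and Plancherel bounds the variance summed over \<open>\<theta>\<close> by \<open>4q\<^sup>2|E|\<^sup>2\<close>.
  This gives \<open>\<Sum>\<^sub>g \<nu>(g)\<^sup>3 \<le> 12q\<^sup>2|E|\<^sup>3 + 4|E|\<^sup>6/q\<^sup>3\<close>, whence \<open>|T\<^sub>2(E)| \<ge> C q\<^sup>3\<close> once \<open>|E|\<^sup>3 \<ge> C' q\<^sup>5\<close>.\<close>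

section \<open>Residues modulo \<open>q\<close> and sums of two squares\<close>

lemma finite_Fq [simp]: "finite (Fq q)"
  by (simp add: Fq_def)

lemma card_Fq [simp]: "card (Fq q) = q"
  by (simp add: Fq_def)

lemma finite_plane [simp]: "finite (plane q)"
  by (simp add: plane_def)

lemma card_plane: "card (plane q) = q ^ 2"
  by (simp add: plane_def card_cartesian_product power2_eq_square)

lemma Fq_eq_if_dvd_diff:
  assumes "a \<in> Fq q" "b \<in> Fq q" "int q dvd a - b"
  shows "a = b"
proof -
  have "a mod int q = a" "b mod int q = b" using assms(1,2) by (auto simp: Fq_def)
  then show ?thesis using assms(3) by (metis mod_eq_dvd_iff)
qed

lemma plane_eq_if_dvd_diff:
  assumes "x \<in> plane q" "y \<in> plane q" "int q dvd fst x - fst y" "int q dvd snd x - snd y"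
  shows "x = y"
  using assms Fq_eq_if_dvd_diff[of "fst x" q "fst y"] Fq_eq_if_dvd_diff[of "snd x" q "snd y"]
  by (auto simp: plane_def prod_eq_iff)

lemma mod_eq_1_iff_dvd: "(x::int) mod int q = 1 mod int q \<longleftrightarrow> int q dvd x - 1"
  by (simp add: mod_eq_dvd_iff)

lemma prime_not_dvd_1: "prime q \<Longrightarrow> \<not> int q dvd 1"
  using prime_gt_1_nat[of q] by simp

lemma fermat_theorem_int:
  fixes b :: int
  assumes "prime q" "\<not> int q dvd b"
  shows "[b ^ (q - 1) = 1] (mod int q)"
proof -
  define c where "c = nat (b mod int q)"
  have c: "int c = b mod int q" using prime_gt_0_nat[OF assms(1)] by (simp add: c_def)
  have "\<not> q dvd c"
  proof
    assume "q dvd c"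
    then have "int q dvd b mod int q" using c by (metis int_dvd_int_iff)
    then show False using assms(2) by (simp add: dvd_mod_iff)
  qed
  then have "[c ^ (q - 1) = 1] (mod q)" using fermat_theorem assms(1) by blast
  then have "[int c ^ (q - 1) = 1] (mod int q)"
    using cong_int_iff[of "c ^ (q-1)" 1 q] by simp
  moreover have "[b ^ (q - 1) = int c ^ (q - 1)] (mod int q)"
    by (rule cong_pow) (simp add: c cong_def)
  ultimately show ?thesis using cong_trans by blast
qed

text \<open>For \<open>q \<equiv> 3 (mod 4)\<close>, \<open>-1\<close> is not a square mod \<open>q\<close>: raising \<open>x\<^sup>2 \<equiv> -y\<^sup>2\<close> to the odd
  power \<open>(q - 1) div 2\<close> would give \<open>1 \<equiv> -1\<close> by Fermat.\<close>
lemma prime_3_mod_4_dvd_sum_squares: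
  fixes x y :: int
  assumes q: "prime q" "q mod 4 = 3" and dvd: "int q dvd x\<^sup>2 + y\<^sup>2"
  shows "int q dvd x \<and> int q dvd y"
proof -
  have pq: "prime (int q)" using q(1) by simp
  have "int q dvd u" if uv: "int q dvd u\<^sup>2 + v\<^sup>2" for u v :: int
  proof (rule ccontr)
    assume nu: "\<not> int q dvd u"
    have nv: "\<not> int q dvd v"
    proof
      assume "int q dvd v"
      then have "int q dvd v\<^sup>2" by (simp add: power2_eq_square)
      then have "int q dvd u\<^sup>2" using uv by (simp add: dvd_add_left_iff)
      then show False using nu pq prime_dvd_power by blast
    qed
    define k where "k = (q - 1) div 2"
    have qk: "q - 1 = 2 * k" and ok: "odd k" using q(2) unfolding k_def by presburger+
    have "[u\<^sup>2 = - (v\<^sup>2)] (mod int q)" using uv by (simp add: cong_iff_dvd_diff)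
    then have "[(u\<^sup>2)^k = (- (v\<^sup>2))^k] (mod int q)" by (rule cong_pow)
    then have "[u^(q-1) = - (v^(q-1))] (mod int q)"
      using ok qk by (simp add: power_mult)
    moreover have "[u^(q-1) = 1] (mod int q)" using fermat_theorem_int q(1) nu by blast
    moreover have "[- (v^(q-1)) = - 1] (mod int q)" using fermat_theorem_int q(1) nv
      by (simp add: cong_minus_minus_iff)
    ultimately have "[1 = - 1] (mod int q)" by (meson cong_sym cong_trans)
    then have "int q dvd 2" by (simp add: cong_iff_dvd_diff)
    then have "q dvd 2" by presburger
    then have "q \<le> 2" by (simp add: dvd_imp_le)
    then show False using q(2) by simp
  qed
  from this[OF dvd] this[of y x] dvd show ?thesis by (simp add: add.commute)
qed

section \<open>Lines meet the unit circle in at most two points\<close>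

lemma card_le_2_if_no_three_distinct:
  assumes "finite S"
    and "\<And>x y z. x \<in> S \<Longrightarrow> y \<in> S \<Longrightarrow> z \<in> S \<Longrightarrow> x \<noteq> y \<Longrightarrow> x \<noteq> z \<Longrightarrow> y \<noteq> z \<Longrightarrow> False"
  shows "card S \<le> 2"
proof (rule ccontr)
  assume "\<not> card S \<le> 2"
  then have "Suc 2 \<le> card S" by simp
  then obtain x y z where "x \<in> S" "y \<in> S" "z \<in> S" "x \<noteq> y" "x \<noteq> z" "y \<noteq> z"
    by (auto simp: card_le_Suc_iff numeral_2_eq_2)
  then show False using assms(2) by blast
qed

definition unit_circle_line :: "nat \<Rightarrow> int \<Rightarrow> int \<Rightarrow> int \<Rightarrow> (int \<times> int) set" where
  "unit_circle_line q s t h =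
     {(a,c) \<in> Fq q \<times> Fq q. int q dvd a*s + c*t - h \<and> int q dvd a*a + c*c - 1}"

lemma finite_unit_circle_line [simp]: "finite (unit_circle_line q s t h)"
  by (rule finite_subset[of _ "Fq q \<times> Fq q"]) (auto simp: unit_circle_line_def)

lemma unit_circle_line_swap:
  "unit_circle_line q s t h = prod.swap ` unit_circle_line q t s h"
  by (force simp: unit_circle_line_def add.commute)

text \<open>Eliminating \<open>c\<close>: \<open>(s\<^sup>2+t\<^sup>2) a\<^sup>2 - 2hsa + h\<^sup>2 - t\<^sup>2 = t\<^sup>2(a\<^sup>2+c\<^sup>2-1) + (as-h-ct)(as+ct-h)\<close>.\<close>
lemma unit_circle_line_quadratic:
  assumes "(a,c) \<in> unit_circle_line q s t h"
  shows "int q dvd (s\<^sup>2+t\<^sup>2)*a\<^sup>2 - 2*h*s*a + h\<^sup>2 - t\<^sup>2"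
proof -
  have "int q dvd a*s + c*t - h" "int q dvd a*a + c*c - 1"
    using assms by (auto simp: unit_circle_line_def)
  moreover have "(s\<^sup>2+t\<^sup>2)*a\<^sup>2 - 2*h*s*a + h\<^sup>2 - t\<^sup>2
      = t\<^sup>2 * (a*a + c*c - 1) + (a*s - h - c*t) * (a*s + c*t - h)"
    by (simp add: algebra_simps power2_eq_square)
  ultimately show ?thesis by (metis dvd_add dvd_mult dvd_mult2)
qed

lemma unit_circle_line_snd_unique:
  assumes "prime q" "\<not> int q dvd t"
    and "(a,c) \<in> unit_circle_line q s t h" "(a,c') \<in> unit_circle_line q s t h"
  shows "c = c'"
proof -
  have "int q dvd a*s + c*t - h" "int q dvd a*s + c'*t - h"
    using assms(3,4) by (auto simp: unit_circle_line_def)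
  then have "int q dvd (a*s + c*t - h) - (a*s + c'*t - h)"
    by (rule dvd_diff)
  moreover have "(a*s + c*t - h) - (a*s + c'*t - h) = t * (c - c')"
    by (simp add: algebra_simps)
  ultimately have "int q dvd c - c'"
    using assms(1,2) prime_dvd_mult_iff[of "int q"] by simp
  then show ?thesis using assms(3,4) Fq_eq_if_dvd_diff by (auto simp: unit_circle_line_def)
qed

text \<open>Two distinct roots \<open>a, a'\<close> of the quadratic of \<open>unit_circle_line_quadratic\<close> have the
  fixed sum \<open>2hs / (s\<^sup>2+t\<^sup>2)\<close>.\<close>
lemma unit_circle_line_sum_fst:
  assumes "prime q" "(a,c) \<in> unit_circle_line q s t h" "(a',c') \<in> unit_circle_line q s t h" "a \<noteq> a'"
  shows "int q dvd (s\<^sup>2+t\<^sup>2) * (a + a') - 2*h*s"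
proof -
  have "int q dvd ((s\<^sup>2+t\<^sup>2)*a\<^sup>2 - 2*h*s*a + h\<^sup>2 - t\<^sup>2) - ((s\<^sup>2+t\<^sup>2)*a'\<^sup>2 - 2*h*s*a' + h\<^sup>2 - t\<^sup>2)"
    using unit_circle_line_quadratic[OF assms(2)] unit_circle_line_quadratic[OF assms(3)]
    by (rule dvd_diff)
  moreover have "((s\<^sup>2+t\<^sup>2)*a\<^sup>2 - 2*h*s*a + h\<^sup>2 - t\<^sup>2) - ((s\<^sup>2+t\<^sup>2)*a'\<^sup>2 - 2*h*s*a' + h\<^sup>2 - t\<^sup>2)
     = (a - a') * ((s\<^sup>2+t\<^sup>2) * (a + a') - 2*h*s)"
    by (simp add: algebra_simps power2_eq_square)
  moreover have "\<not> int q dvd a - a'"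
    using assms(2-4) Fq_eq_if_dvd_diff by (auto simp: unit_circle_line_def)
  ultimately show ?thesis using assms(1) prime_dvd_mult_iff[of "int q"] by simp
qed

lemma card_unit_circle_line_le_2_if_not_dvd:
  assumes q: "prime q" "q mod 4 = 3" and t: "\<not> int q dvd t"
  shows "card (unit_circle_line q s t h) \<le> 2"
proof (rule card_le_2_if_no_three_distinct)
  let ?L = "unit_circle_line q s t h"
  have nsig: "\<not> int q dvd s\<^sup>2 + t\<^sup>2"
    using prime_3_mod_4_dvd_sum_squares[OF q] t by blast
  fix x y z assume xyz: "x \<in> ?L" "y \<in> ?L" "z \<in> ?L" "x \<noteq> y" "x \<noteq> z" "y \<noteq> z"
  obtain a1 c1 a2 c2 a3 c3 where e: "x = (a1,c1)" "y = (a2,c2)" "z = (a3,c3)"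
    by (cases x, cases y, cases z) auto
  have "a1 \<noteq> a2" "a1 \<noteq> a3" "a2 \<noteq> a3"
    using unit_circle_line_snd_unique[OF q(1) t] xyz e by blast+
  then have "int q dvd ((s\<^sup>2+t\<^sup>2) * (a1 + a2) - 2*h*s) - ((s\<^sup>2+t\<^sup>2) * (a1 + a3) - 2*h*s)"
    using unit_circle_line_sum_fst[OF q(1)] xyz e by (metis dvd_diff)
  then have "int q dvd (s\<^sup>2+t\<^sup>2) * (a2 - a3)"
    by (simp add: algebra_simps)
  then have "int q dvd a2 - a3" using nsig q(1) prime_dvd_mult_iff[of "int q"] by simp
  then show False using Fq_eq_if_dvd_diff xyz e \<open>a2 \<noteq> a3\<close> by (auto simp: unit_circle_line_def)
qed simp

text \<open>This is where \<open>q \<equiv> 3 (mod 4)\<close> enters: \<open>s\<^sup>2 + t\<^sup>2 \<noteq> 0\<close> for every nonzero \<open>(s,t)\<close>.\<close>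
lemma card_unit_circle_line_le_2:
  assumes "prime q" "q mod 4 = 3" "\<not> (int q dvd s \<and> int q dvd t)"
  shows "card (unit_circle_line q s t h) \<le> 2"
proof (cases "int q dvd t")
  case True
  then have "card (unit_circle_line q t s h) \<le> 2"
    using card_unit_circle_line_le_2_if_not_dvd assms by blast
  then show ?thesis
    by (metis card_image_le finite_unit_circle_line order_trans unit_circle_line_swap)
qed (use card_unit_circle_line_le_2_if_not_dvd assms in blast)

definition unit_circle :: "nat \<Rightarrow> (int \<times> int) set" where
  "unit_circle q = {(a,c) \<in> Fq q \<times> Fq q. int q dvd a*a + c*c - 1}"

lemma finite_unit_circle [simp]: "finite (unit_circle q)"
  by (rule finite_subset[of _ "Fq q \<times> Fq q"]) (auto simp: unit_circle_def)

lemma unit_circle_nonzero: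
  assumes "prime q" "(a,c) \<in> unit_circle q"
  shows "\<not> (int q dvd a \<and> int q dvd c)"
proof
  assume "int q dvd a \<and> int q dvd c"
  then have "int q dvd a*a + c*c" by simp
  moreover have "int q dvd a*a + c*c - 1" using assms(2) by (simp add: unit_circle_def)
  ultimately have "int q dvd (a*a + c*c) - (a*a + c*c - 1)" by (rule dvd_diff)
  then show False using prime_not_dvd_1[OF assms(1)] by simp
qed

lemma card_unit_circle_le:
  assumes "prime q" "q mod 4 = 3"
  shows "card (unit_circle q) \<le> 2 * q"
proof -
  have "unit_circle q \<subseteq> (\<Union>a\<in>Fq q. unit_circle_line q 1 0 a)"
    by (auto simp: unit_circle_def unit_circle_line_def)
  then have "card (unit_circle q) \<le> card (\<Union>a\<in>Fq q. unit_circle_line q 1 0 a)"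
    by (intro card_mono) auto
  also have "\<dots> \<le> (\<Sum>a\<in>Fq q. card (unit_circle_line q 1 0 a))"
    by (rule card_UN_le) simp
  also have "\<dots> \<le> (\<Sum>a\<in>Fq q. 2)"
    using card_unit_circle_line_le_2[OF assms] prime_not_dvd_1[OF assms(1)]
    by (intro sum_mono) blast
  finally show ?thesis by simp
qed

lemma finite_O2 [simp]: "finite (O2 q)"
  by (rule finite_subset[of _ "Fq q \<times> Fq q \<times> Fq q \<times> Fq q"]) (auto simp: O2_def)

lemma O2_columns:
  assumes "(a,b,c,d) \<in> O2 q"
  shows "(a,c) \<in> unit_circle q" "(b,d) \<in> unit_circle q" "(b,d) \<in> unit_circle_line q a c 0"
proof -
  have "a \<in> Fq q" "b \<in> Fq q" "c \<in> Fq q" "d \<in> Fq q"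
    and "int q dvd a*a + c*c - 1" "int q dvd b*b + d*d - 1" "int q dvd b*a + d*c - 0"
    using assms by (simp_all add: O2_def mod_eq_1_iff_dvd mod_eq_0_iff_dvd mult.commute)
  then show "(a,c) \<in> unit_circle q" "(b,d) \<in> unit_circle q" "(b,d) \<in> unit_circle_line q a c 0"
    by (simp_all add: unit_circle_def unit_circle_line_def)
qed

lemma inj_on_O2_columns: "inj_on (\<lambda>(a,b,c,d). ((a,c),(b,d))) A"
  by (auto simp: inj_on_def)

lemma card_O2_le:
  assumes q: "prime q" "q mod 4 = 3"
  shows "card (O2 q) \<le> 4 * q"
proof -
  let ?cols = "\<lambda>(a::int,b::int,c::int,d::int). ((a,c),(b,d))"
  have "?cols ` O2 q \<subseteq> Sigma (unit_circle q) (\<lambda>(a,c). unit_circle_line q a c 0)"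
    using O2_columns by fastforce
  then have "card (?cols ` O2 q) \<le> card (Sigma (unit_circle q) (\<lambda>(a,c). unit_circle_line q a c 0))"
    by (intro card_mono) auto
  then have "card (O2 q) \<le> card (Sigma (unit_circle q) (\<lambda>(a,c). unit_circle_line q a c 0))"
    by (simp add: card_image[OF inj_on_O2_columns])
  also have "\<dots> = (\<Sum>x\<in>unit_circle q. card ((\<lambda>(a,c). unit_circle_line q a c 0) x))"
    by (rule card_SigmaI) auto
  also have "\<dots> \<le> (\<Sum>x\<in>unit_circle q. 2)"
  proof (rule sum_mono)
    fix x assume x: "x \<in> unit_circle q"
    obtain a c where "x = (a,c)" by (cases x)
    moreover have "\<not> (int q dvd a \<and> int q dvd c)"
      using unit_circle_nonzero[OF q(1)] x \<open>x = (a,c)\<close> by blast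
    ultimately show "card ((\<lambda>(a,c). unit_circle_line q a c 0) x) \<le> 2"
      using card_unit_circle_line_le_2[OF q] by auto
  qed
  also have "\<dots> \<le> 4 * q" using card_unit_circle_le[OF q] by simp
  finally show ?thesis .
qed

section \<open>Additive characters and Plancherel\<close>

definition addchar :: "nat \<Rightarrow> int \<Rightarrow> complex" where
  "addchar q k = cis (2 * pi * real_of_int k / real q)"

lemma addchar_add: "addchar q (k + l) = addchar q k * addchar q l"
  by (simp add: addchar_def cis_mult add_divide_distrib distrib_left)

lemma addchar_diff: "addchar q (k - l) = addchar q k * cnj (addchar q l)"
  by (simp add: addchar_def cis_mult cis_cnj diff_divide_distrib right_diff_distrib)

lemma addchar_0 [simp]: "addchar q 0 = 1"
  by (simp add: addchar_def)

lemma addchar_power: "addchar q k ^ n = addchar q (k * int n)"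
  by (simp add: addchar_def DeMoivre field_simps)

lemma addchar_mult_q:
  assumes "q > 0"
  shows "addchar q (int q * m) = 1"
proof -
  have "2 * pi * real_of_int (int q * m) / real q = 2 * pi * real_of_int m"
    using assms by (simp add: field_simps)
  then show ?thesis by (simp add: addchar_def)
qed

lemma addchar_cong:
  assumes "q > 0" "int q dvd k - l"
  shows "addchar q k = addchar q l"
proof -
  obtain m where "k = l + int q * m" using assms(2) by (metis dvdE diff_add_cancel add.commute)
  then show ?thesis using addchar_add addchar_mult_q[OF assms(1)] by simp
qed

lemma addchar_neq_1:
  assumes "q > 0" "\<not> int q dvd k"
  shows "addchar q k \<noteq> 1"
proof
  assume "addchar q k = 1"
  then have "cos (2 * pi * real_of_int k / real q) = 1"
    by (simp add: addchar_def complex_eq_iff)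
  then obtain n :: int where "2 * pi * real_of_int k / real q = real_of_int n * 2 * pi"
    by (auto simp: cos_one_2pi_int)
  then have "real_of_int k = real_of_int n * real q" using assms(1)
    by (simp add: field_simps)
  then have "k = n * int q" by (metis of_int_eq_iff of_int_mult of_int_of_nat_eq)
  then show False using assms(2) by simp
qed

lemma sum_addchar:
  assumes "q > 0"
  shows "(\<Sum>t\<in>Fq q. addchar q (k * t)) = (if int q dvd k then of_nat q else 0)"
proof (cases "int q dvd k")
  case True
  then have "addchar q (k * t) = 1" for t
    using addchar_cong[OF assms, of "k * t" 0] by simp
  then show ?thesis using True by simp
next
  case False
  define z where "z = addchar q k"
  have "Fq q = int ` {..<q}"
    by (simp add: Fq_def image_int_atLeastLessThan lessThan_atLeast0)
  then have "(\<Sum>t\<in>Fq q. addchar q (k * t)) = (\<Sum>n<q. z ^ n)"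
    by (simp add: sum.reindex z_def addchar_power)
  also have "\<dots> = (z ^ q - 1) / (z - 1)"
    using addchar_neq_1[OF assms False] by (simp add: z_def geometric_sum)
  also have "z ^ q = 1"
    using addchar_mult_q[OF assms, of k] by (simp add: z_def addchar_power mult.commute)
  finally show ?thesis using False by simp
qed

lemma sum_plane: "(\<Sum>\<xi>\<in>plane q. f \<xi>) = (\<Sum>a\<in>Fq q. \<Sum>b\<in>Fq q. f (a,b))"
  unfolding plane_def by (simp add: sum.cartesian_product)

lemma sum_addchar_plane:
  assumes "q > 0"
  shows "(\<Sum>\<xi>\<in>plane q. addchar q (fst \<xi> * w1 + snd \<xi> * w2)) =
     (if int q dvd w1 \<and> int q dvd w2 then of_nat q ^ 2 else 0)"
proof -
  have "(\<Sum>\<xi>\<in>plane q. addchar q (fst \<xi> * w1 + snd \<xi> * w2)) =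
        (\<Sum>a\<in>Fq q. addchar q (w1 * a)) * (\<Sum>b\<in>Fq q. addchar q (w2 * b))"
    unfolding sum_plane sum_product by (simp add: addchar_add mult.commute)
  then show ?thesis
    using sum_addchar[OF assms] by (simp add: power2_eq_square)
qed

definition fourier :: "nat \<Rightarrow> (int \<times> int) set \<Rightarrow> int \<times> int \<Rightarrow> complex" where
  "fourier q E \<eta> = (\<Sum>x\<in>E. addchar q (fst x * fst \<eta> + snd x * snd \<eta>))"

lemma fourier_0: "fourier q E (0,0) = of_nat (card E)"
  by (simp add: fourier_def)

lemma fourier_mod:
  assumes "q > 0"
  shows "fourier q E (u1, u2) = fourier q E (u1 mod int q, u2 mod int q)"
  unfolding fourier_def
proof (intro sum.cong refl addchar_cong[OF assms])
  fix x :: "int \<times> int"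
  have "int q dvd fst x * (u1 - u1 mod int q) + snd x * (u2 - u2 mod int q)"
    by (simp add: mod_eq_dvd_iff[symmetric])
  then show "int q dvd fst x * fst (u1, u2) + snd x * snd (u1, u2) -
       (fst x * fst (u1 mod int q, u2 mod int q) + snd x * snd (u1 mod int q, u2 mod int q))"
    by (simp add: algebra_simps)
qed

lemma norm_fourier_squared:
  "complex_of_real (cmod (fourier q E \<eta>) ^ 2) =
     (\<Sum>x\<in>E. \<Sum>y\<in>E. addchar q (fst \<eta> * (fst x - fst y) + snd \<eta> * (snd x - snd y)))"
proof -
  have "complex_of_real (cmod (fourier q E \<eta>) ^ 2) = fourier q E \<eta> * cnj (fourier q E \<eta>)"
    by (rule complex_norm_square)
  also have "\<dots> = (\<Sum>x\<in>E. \<Sum>y\<in>E. addchar q (fst x * fst \<eta> + snd x * snd \<eta>) *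
                    cnj (addchar q (fst y * fst \<eta> + snd y * snd \<eta>)))"
    by (simp add: fourier_def sum_product cnj_sum)
  also have "\<dots> = (\<Sum>x\<in>E. \<Sum>y\<in>E. addchar q (fst \<eta> * (fst x - fst y) + snd \<eta> * (snd x - snd y)))"
    by (simp add: addchar_diff[symmetric] algebra_simps)
  finally show ?thesis .
qed

theorem plancherel:
  assumes "q > 0" "E \<subseteq> plane q"
  shows "(\<Sum>\<eta>\<in>plane q. cmod (fourier q E \<eta>) ^ 2) = real q ^ 2 * real (card E)"
proof -
  have fE: "finite E" using finite_subset[OF assms(2)] by simp
  have "complex_of_real (\<Sum>\<eta>\<in>plane q. cmod (fourier q E \<eta>) ^ 2) =
        (\<Sum>x\<in>E. \<Sum>y\<in>E. \<Sum>\<eta>\<in>plane q. addchar q (fst \<eta> * (fst x - fst y) + snd \<eta> * (snd x - snd y)))"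
    by (simp only: of_real_sum norm_fourier_squared) (subst sum.swap, subst (2) sum.swap, simp)
  also have "\<dots> = (\<Sum>x\<in>E. \<Sum>y\<in>E. if x = y then of_nat q ^ 2 else 0)"
  proof (intro sum.cong refl)
    fix x y assume "x \<in> E" "y \<in> E"
    then show "(\<Sum>\<eta>\<in>plane q. addchar q (fst \<eta> * (fst x - fst y) + snd \<eta> * (snd x - snd y))) =
          (if x = y then of_nat q ^ 2 else 0)"
      using sum_addchar_plane[OF assms(1)] plane_eq_if_dvd_diff[of x q y] assms(2) by auto
  qed
  also have "\<dots> = complex_of_real (real q ^ 2 * real (card E))"
    using fE by simp
  finally show ?thesis by (simp only: of_real_eq_iff)
qed

section \<open>Overlaps of a set with its rigid images\<close>

lemma Fq_add_mod_eq_iff: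
  assumes "t \<in> Fq q" "y \<in> Fq q"
  shows "(A + t) mod int q = y \<longleftrightarrow> t = (y - A) mod int q"
proof -
  have "y mod int q = y" "t mod int q = t" using assms by (auto simp: Fq_def)
  moreover have "(A + t) mod int q = y mod int q \<longleftrightarrow> t mod int q = (y - A) mod int q"
    by (simp add: mod_eq_dvd_iff algebra_simps)
  ultimately show ?thesis by simp
qed

definition transl_to :: "nat \<Rightarrow> int \<times> int \<times> int \<times> int \<Rightarrow> int \<times> int \<Rightarrow> int \<times> int \<Rightarrow> int \<times> int" where
  "transl_to q \<theta> x y = (case \<theta> of (a,b,c,d) \<Rightarrow>
     ((fst y - (a * fst x + b * snd x)) mod int q, (snd y - (c * fst x + d * snd x)) mod int q))"

lemma transl_to_plane: "q > 0 \<Longrightarrow> transl_to q \<theta> x y \<in> plane q"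
  by (cases \<theta>) (auto simp: transl_to_def plane_def Fq_def)

lemma rigid_app_eq_iff:
  assumes "\<tau> \<in> plane q" "y \<in> plane q"
  shows "rigid_app q \<theta> \<tau> x = y \<longleftrightarrow> \<tau> = transl_to q \<theta> x y"
proof -
  obtain a b c d where th: "\<theta> = (a,b,c,d)" by (cases \<theta>) auto
  have t: "fst \<tau> \<in> Fq q" "snd \<tau> \<in> Fq q" "fst y \<in> Fq q" "snd y \<in> Fq q"
    using assms by (auto simp: plane_def)
  show ?thesis
    using Fq_add_mod_eq_iff[OF t(1) t(3), of "a * fst x + b * snd x"]
          Fq_add_mod_eq_iff[OF t(2) t(4), of "c * fst x + d * snd x"]
    by (auto simp: th rigid_app_def transl_to_def prod_eq_iff add.assoc)
qed

lemma rigid_app_transl_to_eq_iff: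
  assumes "y' \<in> plane q" "\<theta> = (a,b,c,d)"
  shows "rigid_app q \<theta> (transl_to q \<theta> x y) x' = y' \<longleftrightarrow>
    int q dvd a * (fst x' - fst x) + b * (snd x' - snd x) - (fst y' - fst y) \<and>
    int q dvd c * (fst x' - fst x) + d * (snd x' - snd x) - (snd y' - snd y)"
proof -
  have "fst y' mod int q = fst y'" "snd y' mod int q = snd y'"
    using assms(1) by (auto simp: plane_def Fq_def)
  then have "rigid_app q \<theta> (transl_to q \<theta> x y) x' = y' \<longleftrightarrow>
     (a * fst x' + b * snd x' + (fst y - (a * fst x + b * snd x))) mod int q = fst y' mod int q \<and>
     (c * fst x' + d * snd x' + (snd y - (c * fst x + d * snd x))) mod int q = snd y' mod int q"
    by (auto simp: assms(2) rigid_app_def transl_to_def prod_eq_iff mod_add_right_eq)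
  then show ?thesis
    by (simp add: mod_eq_dvd_iff algebra_simps)
qed

lemma sum_of_bool_rigid_app:
  assumes "q > 0" "y \<in> plane q"
  shows "(\<Sum>\<tau>\<in>plane q. of_bool (rigid_app q \<theta> \<tau> x = y) * f \<tau>) =
         (f (transl_to q \<theta> x y) :: 'a::comm_ring_1)"
proof -
  have "(\<Sum>\<tau>\<in>plane q. of_bool (rigid_app q \<theta> \<tau> x = y) * f \<tau>) =
        (\<Sum>\<tau>\<in>plane q. if \<tau> = transl_to q \<theta> x y then f \<tau> else 0)"
    by (intro sum.cong refl) (simp add: rigid_app_eq_iff[OF _ assms(2)])
  also have "\<dots> = f (transl_to q \<theta> x y)"
    using transl_to_plane[OF assms(1)] by (simp add: sum.delta')
  finally show ?thesis .
qed

definition overlap :: "nat \<Rightarrow> (int \<times> int) set \<Rightarrow> int \<times> int \<times> int \<times> int \<Rightarrow> int \<times> int \<Rightarrow> nat" where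
  "overlap q E \<theta> \<tau> = card {x\<in>E. rigid_app q \<theta> \<tau> x \<in> E}"

lemma overlap_le_card: "finite E \<Longrightarrow> overlap q E \<theta> \<tau> \<le> card E"
  unfolding overlap_def by (intro card_mono) auto

lemma overlap_eq_sum:
  assumes "finite E"
  shows "real (overlap q E \<theta> \<tau>) = (\<Sum>x\<in>E. \<Sum>y\<in>E. of_bool (rigid_app q \<theta> \<tau> x = y))"
proof -
  have "real (overlap q E \<theta> \<tau>) = (\<Sum>x\<in>E. of_bool (rigid_app q \<theta> \<tau> x \<in> E))"
    unfolding overlap_def using assms by (simp add: sum.If_cases of_bool_def Int_def)
  also have "\<dots> = (\<Sum>x\<in>E. \<Sum>y\<in>E. of_bool (rigid_app q \<theta> \<tau> x = y))"
    using assms by (intro sum.cong refl) (simp add: of_bool_def sum.delta)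
  finally show ?thesis .
qed

lemma sum_overlap:
  assumes "q > 0" "E \<subseteq> plane q"
  shows "(\<Sum>\<tau>\<in>plane q. real (overlap q E \<theta> \<tau>)) = real (card E) ^ 2"
proof -
  have fE: "finite E" using finite_subset[OF assms(2)] by simp
  have "(\<Sum>\<tau>\<in>plane q. real (overlap q E \<theta> \<tau>)) =
        (\<Sum>\<tau>\<in>plane q. \<Sum>x\<in>E. \<Sum>y\<in>E. of_bool (rigid_app q \<theta> \<tau> x = y) * (1::real))"
    by (simp add: overlap_eq_sum[OF fE])
  also have "\<dots> = (\<Sum>x\<in>E. \<Sum>y\<in>E. \<Sum>\<tau>\<in>plane q. of_bool (rigid_app q \<theta> \<tau> x = y) * (1::real))"
    by (subst sum.swap, subst (2) sum.swap, simp)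
  also have "\<dots> = (\<Sum>x\<in>E. \<Sum>y\<in>E. (1::real))"
    by (intro sum.cong refl sum_of_bool_rigid_app[OF assms(1)]) (use assms(2) in auto)
  finally show ?thesis by (simp add: power2_eq_square)
qed

lemma sum_overlap_squared:
  assumes "q > 0" "E \<subseteq> plane q"
  shows "(\<Sum>\<tau>\<in>plane q. real (overlap q E \<theta> \<tau>) ^ 2) =
    (\<Sum>x\<in>E. \<Sum>x'\<in>E. \<Sum>y\<in>E. \<Sum>y'\<in>E. of_bool (rigid_app q \<theta> (transl_to q \<theta> x y) x' = y'))"
proof -
  have fE: "finite E" using finite_subset[OF assms(2)] by simp
  have "(\<Sum>\<tau>\<in>plane q. real (overlap q E \<theta> \<tau>) ^ 2) =
    (\<Sum>\<tau>\<in>plane q. \<Sum>x\<in>E. \<Sum>x'\<in>E. \<Sum>y\<in>E. \<Sum>y'\<in>E.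
        of_bool (rigid_app q \<theta> \<tau> x = y) * of_bool (rigid_app q \<theta> \<tau> x' = y'))"
    by (simp add: overlap_eq_sum[OF fE] power2_eq_square sum_product)
  also have "\<dots> = (\<Sum>x\<in>E. \<Sum>x'\<in>E. \<Sum>y\<in>E. \<Sum>y'\<in>E. \<Sum>\<tau>\<in>plane q.
        of_bool (rigid_app q \<theta> \<tau> x = y) * of_bool (rigid_app q \<theta> \<tau> x' = y'))"
    by (simp only: sum.swap[where A = "plane q"])
  also have "\<dots> = (\<Sum>x\<in>E. \<Sum>x'\<in>E. \<Sum>y\<in>E. \<Sum>y'\<in>E.
        of_bool (rigid_app q \<theta> (transl_to q \<theta> x y) x' = y'))"
    by (intro sum.cong refl sum_of_bool_rigid_app[OF assms(1)]) (use assms(2) in auto)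
  finally show ?thesis .
qed

definition transpose_app :: "nat \<Rightarrow> int \<times> int \<times> int \<times> int \<Rightarrow> int \<times> int \<Rightarrow> int \<times> int" where
  "transpose_app q \<theta> \<xi> = (case \<theta> of (a,b,c,d) \<Rightarrow>
     ((a * fst \<xi> + c * snd \<xi>) mod int q, (b * fst \<xi> + d * snd \<xi>) mod int q))"

lemma transpose_app_plane: "q > 0 \<Longrightarrow> transpose_app q \<theta> \<xi> \<in> plane q"
  by (cases \<theta>) (auto simp: transpose_app_def plane_def Fq_def)

lemma transpose_app_0: "transpose_app q \<theta> (0,0) = (0,0)"
  by (cases \<theta>) (simp add: transpose_app_def)

text \<open>Orthogonality of characters turns the congruence condition into a sum over frequencies
  \<open>\<xi>\<close>; the linear form \<open>\<xi> \<cdot> \<theta>(x' - x)\<close> equals \<open>\<theta>\<^sup>T\<xi> \<cdot> (x' - x)\<close>.\<close>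
lemma of_bool_rigid_app_transl_to:
  assumes "q > 0" "y' \<in> plane q" "\<theta> = (a,b,c,d)"
  shows "(of_bool (rigid_app q \<theta> (transl_to q \<theta> x y) x' = y') :: complex) =
    (\<Sum>\<xi>\<in>plane q.
       addchar q ((a * fst \<xi> + c * snd \<xi>) * (fst x' - fst x) + (b * fst \<xi> + d * snd \<xi>) * (snd x' - snd x)) *
       cnj (addchar q (fst \<xi> * (fst y' - fst y) + snd \<xi> * (snd y' - snd y)))) / of_nat q ^ 2"
proof -
  define w1 where "w1 = a * (fst x' - fst x) + b * (snd x' - snd x) - (fst y' - fst y)"
  define w2 where "w2 = c * (fst x' - fst x) + d * (snd x' - snd x) - (snd y' - snd y)"
  have "(of_bool (rigid_app q \<theta> (transl_to q \<theta> x y) x' = y') :: complex) =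
        (\<Sum>\<xi>\<in>plane q. addchar q (fst \<xi> * w1 + snd \<xi> * w2)) / of_nat q ^ 2"
    using rigid_app_transl_to_eq_iff[OF assms(2,3)] sum_addchar_plane[OF assms(1), of w1 w2] assms(1)
    by (simp add: w1_def w2_def)
  moreover have "fst \<xi> * w1 + snd \<xi> * w2 =
      ((a * fst \<xi> + c * snd \<xi>) * (fst x' - fst x) + (b * fst \<xi> + d * snd \<xi>) * (snd x' - snd x)) -
      (fst \<xi> * (fst y' - fst y) + snd \<xi> * (snd y' - snd y))" for \<xi>
    by (simp add: w1_def w2_def algebra_simps)
  ultimately show ?thesis by (simp add: addchar_diff)
qed

lemma norm_fourier_transpose_app_squared:
  assumes "q > 0" "\<theta> = (a,b,c,d)"
  shows "complex_of_real (cmod (fourier q E (transpose_app q \<theta> \<xi>)) ^ 2) =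
    (\<Sum>x\<in>E. \<Sum>x'\<in>E.
       addchar q ((a * fst \<xi> + c * snd \<xi>) * (fst x' - fst x) + (b * fst \<xi> + d * snd \<xi>) * (snd x' - snd x)))"
proof -
  have "fourier q E (transpose_app q \<theta> \<xi>) = fourier q E (a * fst \<xi> + c * snd \<xi>, b * fst \<xi> + d * snd \<xi>)"
    using fourier_mod[OF assms(1)] by (simp add: transpose_app_def assms(2))
  then have "complex_of_real (cmod (fourier q E (transpose_app q \<theta> \<xi>)) ^ 2) =
      complex_of_real (cmod (fourier q E (a * fst \<xi> + c * snd \<xi>, b * fst \<xi> + d * snd \<xi>)) ^ 2)"
    by simp
  also have "\<dots> = (\<Sum>x\<in>E. \<Sum>x'\<in>E.
       addchar q ((a * fst \<xi> + c * snd \<xi>) * (fst x' - fst x) + (b * fst \<xi> + d * snd \<xi>) * (snd x' - snd x)))"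
    unfolding norm_fourier_squared by (subst sum.swap) simp
  finally show ?thesis .
qed

lemma sum_overlap_squared_fourier:
  assumes "q > 0" "E \<subseteq> plane q"
  shows "(\<Sum>\<tau>\<in>plane q. real (overlap q E \<theta> \<tau>) ^ 2) =
    (\<Sum>\<xi>\<in>plane q. cmod (fourier q E (transpose_app q \<theta> \<xi>)) ^ 2 * cmod (fourier q E \<xi>) ^ 2) / real q ^ 2"
proof -
  obtain a b c d where th: "\<theta> = (a,b,c,d)" by (cases \<theta>) auto
  define P where "P = (\<lambda>\<xi>::int\<times>int. \<lambda>x x'::int\<times>int.
      (a * fst \<xi> + c * snd \<xi>) * (fst x' - fst x) + (b * fst \<xi> + d * snd \<xi>) * (snd x' - snd x))"
  define Q where "Q = (\<lambda>\<xi>::int\<times>int. \<lambda>y y'::int\<times>int.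
      fst \<xi> * (fst y' - fst y) + snd \<xi> * (snd y' - snd y))"
  have F: "(\<Sum>x\<in>E. \<Sum>x'\<in>E. addchar q (P \<xi> x x')) =
      complex_of_real (cmod (fourier q E (transpose_app q \<theta> \<xi>)) ^ 2)" for \<xi>
    using norm_fourier_transpose_app_squared[OF assms(1) th] by (simp add: P_def)
  have G: "(\<Sum>y\<in>E. \<Sum>y'\<in>E. cnj (addchar q (Q \<xi> y y'))) = complex_of_real (cmod (fourier q E \<xi>) ^ 2)" for \<xi>
  proof -
    have "(\<Sum>y\<in>E. \<Sum>y'\<in>E. cnj (addchar q (Q \<xi> y y'))) = cnj (\<Sum>y'\<in>E. \<Sum>y\<in>E. addchar q (Q \<xi> y y'))"
      unfolding cnj_sum by (subst sum.swap) simp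
    also have "\<dots> = cnj (complex_of_real (cmod (fourier q E \<xi>) ^ 2))"
      unfolding norm_fourier_squared Q_def by simp
    finally show ?thesis by simp
  qed
  have "complex_of_real (\<Sum>\<tau>\<in>plane q. real (overlap q E \<theta> \<tau>) ^ 2) =
    (\<Sum>x\<in>E. \<Sum>x'\<in>E. \<Sum>y\<in>E. \<Sum>y'\<in>E.
       (of_bool (rigid_app q \<theta> (transl_to q \<theta> x y) x' = y') :: complex))"
    by (simp only: sum_overlap_squared[OF assms] of_real_sum) (intro sum.cong refl, simp)
  also have "\<dots> = (\<Sum>x\<in>E. \<Sum>x'\<in>E. \<Sum>y\<in>E. \<Sum>y'\<in>E.
      (\<Sum>\<xi>\<in>plane q. addchar q (P \<xi> x x') * cnj (addchar q (Q \<xi> y y'))) / of_nat q ^ 2)"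
    using of_bool_rigid_app_transl_to[OF assms(1) _ th] assms(2) unfolding P_def Q_def
    by (intro sum.cong refl) blast
  also have "\<dots> = (\<Sum>\<xi>\<in>plane q. \<Sum>x\<in>E. \<Sum>x'\<in>E. \<Sum>y\<in>E. \<Sum>y'\<in>E.
      addchar q (P \<xi> x x') * cnj (addchar q (Q \<xi> y y'))) / of_nat q ^ 2"
    by (simp only: sum_divide_distrib[symmetric] sum.swap[where B = "plane q"])
  also have "\<dots> = (\<Sum>\<xi>\<in>plane q. (\<Sum>x\<in>E. \<Sum>x'\<in>E. addchar q (P \<xi> x x')) *
      (\<Sum>y\<in>E. \<Sum>y'\<in>E. cnj (addchar q (Q \<xi> y y')))) / of_nat q ^ 2"
  proof -
    have "(\<Sum>x\<in>E. \<Sum>x'\<in>E. addchar q (P \<xi> x x')) * (\<Sum>y\<in>E. \<Sum>y'\<in>E. cnj (addchar q (Q \<xi> y y')))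
        = (\<Sum>x\<in>E. \<Sum>x'\<in>E. \<Sum>y\<in>E. \<Sum>y'\<in>E. addchar q (P \<xi> x x') * cnj (addchar q (Q \<xi> y y')))"
      for \<xi> by (simp only: sum_distrib_right) (simp only: sum_distrib_left)
    then show ?thesis by simp
  qed
  also have "\<dots> = complex_of_real ((\<Sum>\<xi>\<in>plane q.
      cmod (fourier q E (transpose_app q \<theta> \<xi>)) ^ 2 * cmod (fourier q E \<xi>) ^ 2) / real q ^ 2)"
    by (simp add: F G)
  finally show ?thesis by (simp only: of_real_eq_iff)
qed

section \<open>The variance of the overlaps\<close>

lemma plane_nonzero:
  assumes "\<xi> \<in> plane q" "\<xi> \<noteq> (0,0)"
  shows "\<not> (int q dvd fst \<xi> \<and> int q dvd snd \<xi>)"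
proof
  assume "int q dvd fst \<xi> \<and> int q dvd snd \<xi>"
  moreover have "(0,0) \<in> plane q" using assms(1) by (auto simp: plane_def Fq_def)
  ultimately have "\<xi> = (0,0)" using plane_eq_if_dvd_diff[OF assms(1)] by fastforce
  then show False using assms(2) by simp
qed

text \<open>The first row of \<open>\<theta>\<^sup>T\<close> is the column \<open>(a,c)\<close> of \<open>\<theta>\<close>, so \<open>\<theta>\<^sup>T \<xi> = \<eta>\<close> puts
  both columns of \<open>\<theta>\<close> on lines with normal \<open>\<xi>\<close>.\<close>
lemma card_transpose_app_fiber_le_4:
  assumes q: "prime q" "q mod 4 = 3" and \<xi>: "\<xi> \<in> plane q" "\<xi> \<noteq> (0,0)"
  shows "card {\<theta>\<in>O2 q. transpose_app q \<theta> \<xi> = \<eta>} \<le> 4"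
proof -
  let ?cols = "\<lambda>(a::int,b::int,c::int,d::int). ((a,c),(b,d))"
  let ?F = "{\<theta>\<in>O2 q. transpose_app q \<theta> \<xi> = \<eta>}"
  let ?L = "\<lambda>h. unit_circle_line q (fst \<xi>) (snd \<xi>) h"
  have "?cols ` ?F \<subseteq> ?L (fst \<eta>) \<times> ?L (snd \<eta>)"
  proof (rule image_subsetI)
    fix \<theta> assume "\<theta> \<in> ?F"
    then obtain a b c d where th: "\<theta> = (a,b,c,d)" "(a,b,c,d) \<in> O2 q"
      "(a * fst \<xi> + c * snd \<xi>) mod int q = fst \<eta>" "(b * fst \<xi> + d * snd \<xi>) mod int q = snd \<eta>"
      by (cases \<theta>) (auto simp: transpose_app_def)
    then have "int q dvd a * fst \<xi> + c * snd \<xi> - fst \<eta>" "int q dvd b * fst \<xi> + d * snd \<xi> - snd \<eta>"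
      by (metis minus_mod_eq_mult_div dvd_triv_left)+
    with O2_columns[OF th(2)] show "?cols \<theta> \<in> ?L (fst \<eta>) \<times> ?L (snd \<eta>)"
      by (simp add: th(1) unit_circle_def unit_circle_line_def)
  qed
  then have "card (?cols ` ?F) \<le> card (?L (fst \<eta>) \<times> ?L (snd \<eta>))"
    by (intro card_mono) auto
  then have "card ?F \<le> card (?L (fst \<eta>) \<times> ?L (snd \<eta>))"
    by (simp add: card_image[OF inj_on_O2_columns])
  also have "\<dots> \<le> 2 * 2"
    unfolding card_cartesian_product
    using card_unit_circle_line_le_2[OF q plane_nonzero[OF \<xi>]] by (intro mult_le_mono)
  finally show ?thesis by simp
qed

lemma sum_O2_transpose_app_le:
  assumes q: "prime q" "q mod 4 = 3" and \<xi>: "\<xi> \<in> plane q" "\<xi> \<noteq> (0,0)"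
    and f: "\<And>\<eta>. f \<eta> \<ge> (0::real)"
  shows "(\<Sum>\<theta>\<in>O2 q. f (transpose_app q \<theta> \<xi>)) \<le> 4 * (\<Sum>\<eta>\<in>plane q. f \<eta>)"
proof -
  let ?F = "\<lambda>\<eta>. {\<theta>\<in>O2 q. transpose_app q \<theta> \<xi> = \<eta>}"
  have "(\<Sum>\<theta>\<in>O2 q. f (transpose_app q \<theta> \<xi>)) =
       (\<Sum>\<eta>\<in>(\<lambda>\<theta>. transpose_app q \<theta> \<xi>) ` O2 q. \<Sum>\<theta>\<in>?F \<eta>. f (transpose_app q \<theta> \<xi>))"
    by (rule sum.image_gen) simp
  also have "\<dots> = (\<Sum>\<eta>\<in>(\<lambda>\<theta>. transpose_app q \<theta> \<xi>) ` O2 q. real (card (?F \<eta>)) * f \<eta>)"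
    by (intro sum.cong refl) simp
  also have "\<dots> \<le> (\<Sum>\<eta>\<in>(\<lambda>\<theta>. transpose_app q \<theta> \<xi>) ` O2 q. 4 * f \<eta>)"
    using card_transpose_app_fiber_le_4[OF q \<xi>] f by (intro sum_mono mult_right_mono) auto
  also have "\<dots> \<le> (\<Sum>\<eta>\<in>plane q. 4 * f \<eta>)"
  proof (rule sum_mono2)
    show "(\<lambda>\<theta>. transpose_app q \<theta> \<xi>) ` O2 q \<subseteq> plane q"
      using transpose_app_plane[OF prime_gt_0_nat[OF q(1)]] by blast
  qed (use f in auto)
  finally show ?thesis by (simp add: sum_distrib_left)
qed

text \<open>The frequency \<open>\<xi> = 0\<close> contributes exactly the mean \<open>|E|\<^sup>4/q\<^sup>2\<close> to \<open>\<Sum>\<^sub>\<tau> \<nu>\<^sup>2\<close>; for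
  \<open>\<xi> \<noteq> 0\<close>, summing over \<open>\<theta>\<close> moves \<open>\<theta>\<^sup>T\<xi>\<close> through each point at most four times, and
  Plancherel finishes.\<close>
lemma sum_O2_overlap_variance_le:
  assumes q: "prime q" "q mod 4 = 3" and E: "E \<subseteq> plane q"
  shows "(\<Sum>\<theta>\<in>O2 q. (\<Sum>\<tau>\<in>plane q. real (overlap q E \<theta> \<tau>) ^ 2) - real (card E) ^ 4 / real q ^ 2)
          \<le> 4 * real q ^ 2 * real (card E) ^ 2"
proof -
  have q0: "q > 0" using prime_gt_0_nat[OF q(1)] .
  define n where "n = real (card E)"
  define B where "B = (\<lambda>\<xi>. cmod (fourier q E \<xi>) ^ 2)"
  define Z where "Z = plane q - {(0,0)}"
  have B_nonneg: "B \<xi> \<ge> 0" for \<xi> by (simp add: B_def)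
  have sum_B: "(\<Sum>\<eta>\<in>plane q. B \<eta>) = real q ^ 2 * n"
    using plancherel[OF q0 E] by (simp add: B_def n_def)
  have "(0,0) \<in> plane q" using q0 by (simp add: plane_def Fq_def)
  then have "(\<Sum>\<xi>\<in>plane q. B (transpose_app q \<theta> \<xi>) * B \<xi>) = n^4 + (\<Sum>\<xi>\<in>Z. B (transpose_app q \<theta> \<xi>) * B \<xi>)"
    for \<theta>
    by (simp add: Z_def sum.remove transpose_app_0 B_def fourier_0 n_def power2_eq_square
        power4_eq_xxxx)
  then have variance: "(\<Sum>\<tau>\<in>plane q. real (overlap q E \<theta> \<tau>) ^ 2) - n ^ 4 / real q ^ 2
        = (\<Sum>\<xi>\<in>Z. B (transpose_app q \<theta> \<xi>) * B \<xi>) / real q ^ 2" for \<theta>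
    using sum_overlap_squared_fourier[OF q0 E, of \<theta>] by (simp add: B_def add_divide_distrib)
  have "(\<Sum>\<theta>\<in>O2 q. (\<Sum>\<tau>\<in>plane q. real (overlap q E \<theta> \<tau>) ^ 2) - n ^ 4 / real q ^ 2)
      = (\<Sum>\<xi>\<in>Z. B \<xi> * (\<Sum>\<theta>\<in>O2 q. B (transpose_app q \<theta> \<xi>))) / real q ^ 2"
    by (simp add: variance sum_divide_distrib[symmetric] sum_distrib_left
        sum.swap[where A = "O2 q"] mult.commute)
  also have "\<dots> \<le> (\<Sum>\<xi>\<in>Z. B \<xi> * (4 * (real q ^ 2 * n))) / real q ^ 2"
  proof (intro divide_right_mono sum_mono mult_left_mono)
    fix \<xi> assume "\<xi> \<in> Z"
    then have "(\<Sum>\<theta>\<in>O2 q. B (transpose_app q \<theta> \<xi>)) \<le> 4 * (\<Sum>\<eta>\<in>plane q. B \<eta>)"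
      using sum_O2_transpose_app_le[OF q] B_nonneg by (simp add: Z_def)
    then show "(\<Sum>\<theta>\<in>O2 q. B (transpose_app q \<theta> \<xi>)) \<le> 4 * (real q ^ 2 * n)"
      by (simp add: sum_B)
  qed (auto simp: B_nonneg)
  also have "\<dots> = 4 * n * (\<Sum>\<xi>\<in>Z. B \<xi>)"
    using q0 by (simp add: sum_distrib_right[symmetric])
  also have "\<dots> \<le> 4 * n * (\<Sum>\<xi>\<in>plane q. B \<xi>)"
    by (intro mult_left_mono sum_mono2) (auto simp: Z_def B_nonneg n_def)
  finally show ?thesis
    by (simp add: sum_B n_def power2_eq_square mult_ac)
qed

text \<open>For \<open>0 \<le> v \<le> N\<close> with mean \<open>M \<le> N\<close>:
  \<open>v\<^sup>3 = v (v - M)\<^sup>2 + 2M v\<^sup>2 - M\<^sup>2 v\<close>, and \<open>v (v - M)\<^sup>2 \<le> N (v - M)\<^sup>2\<close>.\<close>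
lemma sum_cube_le_variance:
  fixes v :: "'a \<Rightarrow> real"
  assumes "finite I" "\<And>i. i \<in> I \<Longrightarrow> 0 \<le> v i \<and> v i \<le> N"
    and mean: "(\<Sum>i\<in>I. v i) = real (card I) * M" and "0 \<le> M" "M \<le> N"
  shows "(\<Sum>i\<in>I. v i ^ 3) \<le> 3 * N * ((\<Sum>i\<in>I. v i ^ 2) - real (card I) * M^2) + real (card I) * M^3"
proof -
  define D where "D = (\<Sum>i\<in>I. v i ^ 2) - real (card I) * M^2"
  have "(\<Sum>i\<in>I. (v i - M)^2) = (\<Sum>i\<in>I. v i ^ 2 - (2 * M) * v i + M^2)"
    by (simp add: power2_diff algebra_simps)
  also have "\<dots> = D"
    using mean by (simp add: D_def sum.distrib sum_subtractf sum_distrib_left[symmetric] power2_eq_square)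
  finally have D: "(\<Sum>i\<in>I. (v i - M)^2) = D" .
  have "D \<ge> 0" using D[symmetric] by (simp add: sum_nonneg)
  have "(\<Sum>i\<in>I. v i ^ 3) = (\<Sum>i\<in>I. v i * (v i - M)^2 + 2 * M * v i ^ 2 - M^2 * v i)"
    by (simp add: power2_eq_square power3_eq_cube algebra_simps)
  also have "\<dots> = (\<Sum>i\<in>I. v i * (v i - M)^2) + 2 * M * (\<Sum>i\<in>I. v i ^ 2) - M^2 * (\<Sum>i\<in>I. v i)"
    by (simp add: sum.distrib sum_subtractf sum_distrib_left)
  also have "\<dots> = (\<Sum>i\<in>I. v i * (v i - M)^2) + 2 * M * D + real (card I) * M^3"
    by (simp add: mean D_def algebra_simps power2_eq_square power3_eq_cube)
  also have "(\<Sum>i\<in>I. v i * (v i - M)^2) \<le> N * D"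
    unfolding D[symmetric] sum_distrib_left using assms(2) by (intro sum_mono mult_right_mono) auto
  finally show ?thesis
    using \<open>D \<ge> 0\<close> \<open>0 \<le> M\<close> \<open>M \<le> N\<close> mult_right_mono[of M N D] by (simp add: D_def algebra_simps)
qed

lemma sum_overlap_cube_le:
  assumes q: "prime q" "q mod 4 = 3" and E: "E \<subseteq> plane q"
  shows "(\<Sum>\<theta>\<in>O2 q. \<Sum>\<tau>\<in>plane q. real (overlap q E \<theta> \<tau>) ^ 3)
     \<le> 12 * real q ^ 2 * real (card E) ^ 3 + 4 * real (card E) ^ 6 / real q ^ 3"
proof -
  have q0: "q > 0" using prime_gt_0_nat[OF q(1)] .
  define n where "n = real (card E)"
  define M where "M = n^2 / real q ^ 2"
  define I where "I = O2 q \<times> plane q"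
  define v where "v = (\<lambda>g. real (overlap q E (fst g) (snd g)))"
  have card_I: "real (card I) = real (card (O2 q)) * real q ^ 2"
    by (simp add: I_def card_cartesian_product card_plane)
  have sum_I: "(\<Sum>g\<in>I. h g) = (\<Sum>\<theta>\<in>O2 q. \<Sum>\<tau>\<in>plane q. h (\<theta>,\<tau>))" for h :: "_ \<Rightarrow> real"
    by (simp add: I_def sum.cartesian_product)
  have "card E \<le> card (plane q)" using E by (intro card_mono) auto
  then have "n \<le> real q ^ 2" by (simp add: n_def card_plane)
  then have "n^2 \<le> n * real q ^ 2" by (simp add: n_def power2_eq_square mult_left_mono)
  then have "M \<le> n" using q0 by (simp add: M_def divide_le_eq)
  moreover have "(\<Sum>g\<in>I. v g) = real (card I) * M"
    using sum_overlap[OF q0 E] q0 by (simp add: sum_I v_def card_I M_def n_def)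
  ultimately have cube: "(\<Sum>g\<in>I. v g ^ 3) \<le> 3 * n * ((\<Sum>g\<in>I. v g ^ 2) - real (card I) * M^2) + real (card I) * M^3"
    using finite_subset[OF E] overlap_le_card
    by (intro sum_cube_le_variance) (auto simp: I_def v_def n_def M_def)
  have "(\<Sum>g\<in>I. v g ^ 2) - real (card I) * M^2 =
      (\<Sum>\<theta>\<in>O2 q. (\<Sum>\<tau>\<in>plane q. real (overlap q E \<theta> \<tau>) ^ 2) - n^4 / real q ^ 2)"
    using q0 by (simp add: sum_I v_def sum_subtractf card_I M_def power2_eq_square power4_eq_xxxx)
  also have "\<dots> \<le> 4 * real q ^ 2 * n ^ 2"
    using sum_O2_overlap_variance_le[OF q E] by (simp add: n_def)
  finally have "3 * n * ((\<Sum>g\<in>I. v g ^ 2) - real (card I) * M^2) \<le> 3 * n * (4 * real q ^ 2 * n ^ 2)"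
    by (intro mult_left_mono) (auto simp: n_def)
  moreover have "real (card I) * M^3 \<le> (4 * real q) * real q ^ 2 * M^3"
    using card_O2_le[OF q] unfolding card_I by (intro mult_right_mono) (auto simp: M_def)
  moreover have "(4 * real q) * real q ^ 2 * M^3 = 4 * n^6 / real q ^ 3"
    using q0 by (simp add: M_def field_simps power_eq_if)
  ultimately have "(\<Sum>g\<in>I. v g ^ 3) \<le> 12 * real q ^ 2 * n ^ 3 + 4 * n^6 / real q ^ 3"
    using cube by (simp add: algebra_simps power2_eq_square power3_eq_cube)
  then show ?thesis
    by (simp add: sum_I v_def n_def)
qed

section \<open>Counting congruent triangles\<close>

lemma square_sum_le_card_mult_sum_squares:
  fixes c :: "'a \<Rightarrow> real"
  assumes "finite I"
  shows "(\<Sum>i\<in>I. c i)^2 \<le> real (card I) * (\<Sum>i\<in>I. c i ^ 2)"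
proof -
  have "0 \<le> (\<Sum>i\<in>I. \<Sum>j\<in>I. (c i - c j)^2)" by (intro sum_nonneg) auto
  also have "\<dots> = (\<Sum>i\<in>I. \<Sum>j\<in>I. c i ^ 2 + c j ^ 2 - 2 * (c i * c j))"
    by (simp add: power2_diff mult.assoc)
  also have "\<dots> = (\<Sum>i\<in>I. \<Sum>j\<in>I. c i ^ 2) + (\<Sum>i\<in>I. \<Sum>j\<in>I. c j ^ 2)
      - 2 * (\<Sum>i\<in>I. \<Sum>j\<in>I. c i * c j)"
    by (simp only: sum.distrib sum_subtractf sum_distrib_left)
  also have "(\<Sum>i\<in>I. \<Sum>j\<in>I. c i ^ 2) = real (card I) * (\<Sum>i\<in>I. c i ^ 2)"
    by (simp add: sum_distrib_left)
  also have "(\<Sum>i\<in>I. \<Sum>j\<in>I. c j ^ 2) = real (card I) * (\<Sum>i\<in>I. c i ^ 2)"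
    by simp
  also have "(\<Sum>i\<in>I. \<Sum>j\<in>I. c i * c j) = (\<Sum>i\<in>I. c i)^2"
    by (simp only: sum_product[symmetric] power2_eq_square)
  finally show ?thesis by simp
qed

lemma card_squared_le_card_image_mult_collisions:
  assumes "finite A"
  shows "real (card A) ^ 2 \<le> real (card (f ` A)) * real (card {p \<in> A \<times> A. f (fst p) = f (snd p)})"
proof -
  define fib where "fib = (\<lambda>b. {x\<in>A. f x = b})"
  have "card A = (\<Sum>b\<in>f ` A. card (fib b))"
    unfolding fib_def using card_eq_sum sum.image_gen[OF assms, of "\<lambda>_. 1::nat" f] by simp
  moreover have "{p \<in> A \<times> A. f (fst p) = f (snd p)} = (\<Union>b\<in>f ` A. fib b \<times> fib b)"
    by (auto simp: fib_def)
  then have "card {p \<in> A \<times> A. f (fst p) = f (snd p)} = (\<Sum>b\<in>f ` A. card (fib b \<times> fib b))"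
    using assms by (simp only:) (rule card_UN_disjoint; auto simp: fib_def)
  then have "card {p \<in> A \<times> A. f (fst p) = f (snd p)} = (\<Sum>b\<in>f ` A. card (fib b) ^ 2)"
    by (simp add: card_cartesian_product power2_eq_square)
  ultimately show ?thesis
    using assms square_sum_le_card_mult_sum_squares[of "f ` A" "\<lambda>b. real (card (fib b))"] by simp
qed

definition rigid_app_tri :: "nat \<Rightarrow> int \<times> int \<times> int \<times> int \<Rightarrow> int \<times> int \<Rightarrow> tri \<Rightarrow> tri" where
  "rigid_app_tri q \<theta> \<tau> s = (case s of (x1,x2,x3) \<Rightarrow>
     (rigid_app q \<theta> \<tau> x1, rigid_app q \<theta> \<tau> x2, rigid_app q \<theta> \<tau> x3))"

lemma congruent_iff_rigid_app_tri:
  "congruent q s t \<longleftrightarrow> (\<exists>\<theta>\<in>O2 q. \<exists>\<tau>\<in>plane q. t = rigid_app_tri q \<theta> \<tau> s)"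
  by (cases s, cases t) (simp add: congruent_def rigid_app_tri_def)

text \<open>A congruent pair \<open>(s, g s)\<close> of triangles in \<open>E\<close> is determined by \<open>g\<close> and a triangle
  \<open>s\<close> in \<open>E \<inter> g\<^sup>-\<^sup>1 E\<close>.\<close>
lemma card_congruent_pairs_le_sum_overlap_cube:
  assumes "finite E"
  shows "real (card {p \<in> (E \<times> E \<times> E) \<times> (E \<times> E \<times> E). congruent q (fst p) (snd p)})
     \<le> (\<Sum>\<theta>\<in>O2 q. \<Sum>\<tau>\<in>plane q. real (overlap q E \<theta> \<tau>) ^ 3)"
proof -
  define P where "P = E \<times> E \<times> E"
  define U where "U = (\<lambda>(\<theta>,\<tau>). (\<lambda>s. (s, rigid_app_tri q \<theta> \<tau> s)) ` {s\<in>P. rigid_app_tri q \<theta> \<tau> s \<in> P})"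
  have fU: "finite (U g)" for g
    using assms by (cases g) (simp add: U_def P_def)
  have card_U: "card (U (\<theta>,\<tau>)) \<le> overlap q E \<theta> \<tau> ^ 3" for \<theta> \<tau>
  proof -
    define S where "S = {x\<in>E. rigid_app q \<theta> \<tau> x \<in> E}"
    have "{s\<in>P. rigid_app_tri q \<theta> \<tau> s \<in> P} = S \<times> S \<times> S"
      by (auto simp: P_def S_def rigid_app_tri_def)
    moreover have "card (U (\<theta>,\<tau>)) \<le> card {s\<in>P. rigid_app_tri q \<theta> \<tau> s \<in> P}"
      unfolding U_def using assms by (simp add: card_image_le P_def)
    ultimately have "card (U (\<theta>,\<tau>)) \<le> card (S \<times> S \<times> S)"
      by simp
    then show ?thesis by (simp add: overlap_def S_def card_cartesian_product power3_eq_cube)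
  qed
  have "{p \<in> P \<times> P. congruent q (fst p) (snd p)} \<subseteq> (\<Union>g\<in>O2 q \<times> plane q. U g)"
    by (auto simp: congruent_iff_rigid_app_tri U_def)
  then have "card {p \<in> P \<times> P. congruent q (fst p) (snd p)} \<le> card (\<Union>g\<in>O2 q \<times> plane q. U g)"
    using fU by (intro card_mono) auto
  also have "\<dots> \<le> (\<Sum>g\<in>O2 q \<times> plane q. card (U g))"
    by (rule card_UN_le) simp
  also have "\<dots> \<le> (\<Sum>(\<theta>,\<tau>)\<in>O2 q \<times> plane q. overlap q E \<theta> \<tau> ^ 3)"
    using card_U by (intro sum_mono) auto
  finally have "real (card {p \<in> P \<times> P. congruent q (fst p) (snd p)}) \<le>
      real (\<Sum>(\<theta>,\<tau>)\<in>O2 q \<times> plane q. overlap q E \<theta> \<tau> ^ 3)"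
    by (simp only: of_nat_le_iff)
  then show ?thesis
    by (simp add: P_def sum.cartesian_product case_prod_beta)
qed

lemma mem_cong_class_self:
  assumes "q \<ge> 2" "t \<in> triples q"
  shows "t \<in> cong_class q t"
proof -
  have "(1,0,0,1) \<in> O2 q" "(0,0) \<in> plane q"
    using assms(1) by (simp_all add: O2_def plane_def Fq_def)
  moreover have "rigid_app q (1,0,0,1) (0,0) x = x" if "x \<in> plane q" for x
    using that by (cases x) (simp add: rigid_app_def plane_def Fq_def)
  ultimately have "congruent q t t"
    using assms(2) by (cases t) (force simp: congruent_def triples_def)
  then show ?thesis using assms(2) by (simp add: cong_class_def)
qed

text \<open>Cauchy--Schwarz over the congruence classes of triangles in \<open>E\<close>.\<close>
lemma card_pow_6_le_card_T2_mult:
  assumes q: "prime q" "q mod 4 = 3" and E: "E \<subseteq> plane q"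
  shows "real (card E) ^ 6 \<le> real (card (T2 q E)) *
      (12 * real q ^ 2 * real (card E) ^ 3 + 4 * real (card E) ^ 6 / real q ^ 3)"
proof -
  have q2: "q \<ge> 2" using prime_ge_2_nat[OF q(1)] .
  have fE: "finite E" using finite_subset[OF E] by simp
  define P where "P = E \<times> E \<times> E"
  have fP: "finite P" using fE by (simp add: P_def)
  have P_triples: "P \<subseteq> triples q" using E by (auto simp: P_def triples_def)
  have "cong_class q ` P \<subseteq> T2 q E"
  proof
    fix C assume "C \<in> cong_class q ` P"
    then obtain t where t: "t \<in> P" "C = cong_class q t" by auto
    then have "t \<in> C" using mem_cong_class_self[OF q2] P_triples by blast
    then show "C \<in> T2 q E" using t P_triples by (auto simp: T2_def P_def)
  qed
  moreover have "finite (T2 q E)"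
    by (rule finite_subset[of _ "cong_class q ` triples q"]) (auto simp: T2_def triples_def)
  ultimately have classes: "card (cong_class q ` P) \<le> card (T2 q E)"
    by (rule card_mono[rotated])
  have "{p \<in> P \<times> P. cong_class q (fst p) = cong_class q (snd p)} \<subseteq>
        {p \<in> P \<times> P. congruent q (fst p) (snd p)}"
  proof
    fix p assume p: "p \<in> {p \<in> P \<times> P. cong_class q (fst p) = cong_class q (snd p)}"
    then have "snd p \<in> cong_class q (fst p)"
      using mem_cong_class_self[OF q2] P_triples by auto
    then show "p \<in> {p \<in> P \<times> P. congruent q (fst p) (snd p)}"
      using p by (simp add: cong_class_def)
  qed
  then have "real (card {p \<in> P \<times> P. cong_class q (fst p) = cong_class q (snd p)})
      \<le> real (card {p \<in> P \<times> P. congruent q (fst p) (snd p)})"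
    using fP by (simp add: card_mono)
  also have "\<dots> \<le> (\<Sum>\<theta>\<in>O2 q. \<Sum>\<tau>\<in>plane q. real (overlap q E \<theta> \<tau>) ^ 3)"
    using card_congruent_pairs_le_sum_overlap_cube[OF fE] by (simp add: P_def)
  also have "\<dots> \<le> 12 * real q ^ 2 * real (card E) ^ 3 + 4 * real (card E) ^ 6 / real q ^ 3"
    by (rule sum_overlap_cube_le[OF q E])
  finally have collisions: "real (card {p \<in> P \<times> P. cong_class q (fst p) = cong_class q (snd p)})
     \<le> 12 * real q ^ 2 * real (card E) ^ 3 + 4 * real (card E) ^ 6 / real q ^ 3" .
  have "real (card P) = real (card E) ^ 3"
    by (simp add: P_def card_cartesian_product power3_eq_cube)
  then have "real (card E) ^ 6 = real (card P) ^ 2"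
    by (simp flip: power_mult)
  also have "\<dots> \<le> real (card (cong_class q ` P)) *
      real (card {p \<in> P \<times> P. cong_class q (fst p) = cong_class q (snd p)})"
    by (rule card_squared_le_card_image_mult_collisions[OF fP])
  also have "\<dots> \<le> real (card (T2 q E)) *
      (12 * real q ^ 2 * real (card E) ^ 3 + 4 * real (card E) ^ 6 / real q ^ 3)"
    using classes collisions by (intro mult_mono) auto
  finally show ?thesis .
qed

lemma cube_le_mult_if_pow_6_le:
  fixes C x n T :: real
  assumes "C > 0" "x > 0" "n > 0" "T \<ge> 0" and "C^3 * x^5 \<le> n^3"
    and "n^6 \<le> T * (12 * x^2 * n^3 + 4 * n^6 / x^3)"
  shows "x^3 \<le> (4 + 12 / C^3) * T"
proof -
  have "(x^2 * n^3) * (C^3 * x^3) = (C^3 * x^5) * n^3"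
    by (simp add: algebra_simps flip: power_add)
  also have "\<dots> \<le> n^3 * n^3"
    using assms(3,5) by (intro mult_right_mono) auto
  also have "\<dots> = n^6" by (simp flip: power_add)
  finally have "x^2 * n^3 \<le> n^6 / (C^3 * x^3)"
    using assms(1,2) by (subst pos_le_divide_eq) auto
  also have "n^6 / (C^3 * x^3) = (n^6 / x^3) / C^3" by simp
  finally have "12 * x^2 * n^3 + 4 * n^6 / x^3 \<le> (4 + 12 / C^3) * (n^6 / x^3)"
    by (simp add: algebra_simps)
  then have "n^6 \<le> T * ((4 + 12 / C^3) * (n^6 / x^3))"
    using assms(4,6) mult_left_mono order_trans by blast
  also have "T * ((4 + 12 / C^3) * (n^6 / x^3)) = ((4 + 12 / C^3) * T / x^3) * n^6"
    by simp
  finally have "1 * n^6 \<le> ((4 + 12 / C^3) * T / x^3) * n^6" by (simp only: mult_1)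
  then have "1 \<le> (4 + 12 / C^3) * T / x^3"
    by (rule mult_right_le_imp_le) (use assms(3) in simp)
  then show ?thesis
    using assms(2) by (simp add: field_simps)
qed

lemma cube_le_of_powr_7_4_less:
  fixes C x n :: real
  assumes "C > 0" "x \<ge> 1" "C * x powr (7/4) < n"
  shows "C^3 * x^5 \<le> n^3"
proof -
  have "x^5 = x powr 5" using assms(2) by (simp add: powr_realpow)
  also have "\<dots> \<le> x powr (3 * (7/4))" using assms(2) by (intro powr_mono) auto
  also have "\<dots> = (x powr (7/4))^3" using assms(2) powr_power[of x "7/4" 3] by simp
  finally have "C^3 * x^5 \<le> (C * x powr (7/4))^3"
    using assms(1) by (simp add: power_mult_distrib)
  also have "\<dots> \<le> n^3"
    using assms by (intro power_mono) auto
  finally show ?thesis .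
qed

text \<open>Only \<open>C1 > 0\<close> is used: the argument gives \<open>|T\<^sub>2(E)| \<ge> C2 q\<^sup>3\<close> already once
  \<open>|E| \<ge> C1 q\<^sup>5\<^sup>/\<^sup>3\<close>.\<close>
theorem theorem1p1:
  fixes C1 :: real
  assumes "C1 > root 4 2"
  shows "\<exists>C2 > 0. \<forall>(q::nat) (E::(int \<times> int) set).
           prime q \<longrightarrow> q mod 4 = 3 \<longrightarrow> E \<subseteq> plane q \<longrightarrow>
           real (card E) > C1 * real q powr (7/4) \<longrightarrow>
           real (card (T2 q E)) \<ge> C2 * real q ^ 3"
proof -
  have "root 4 2 > (0::real)" by simp
  then have C1: "C1 > 0" using assms by linarith
  define K where "K = 4 + 12 / C1^3"
  have K: "K > 0" using C1 by (simp add: K_def add_pos_nonneg)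
  show ?thesis
  proof (intro exI[of _ "1 / K"] conjI allI impI)
    fix q :: nat and E :: "(int \<times> int) set"
    assume q: "prime q" "q mod 4 = 3" and E: "E \<subseteq> plane q"
      and large: "real (card E) > C1 * real q powr (7/4)"
    have q1: "real q \<ge> 1" using prime_ge_2_nat[OF q(1)] by simp
    then have "0 < C1 * real q powr (7/4)" using C1 by simp
    then have "real (card E) > 0" using large by linarith
    then have "real q ^ 3 \<le> K * real (card (T2 q E))"
      unfolding K_def using q1
      by (intro cube_le_mult_if_pow_6_le[OF C1 _ _ _ cube_le_of_powr_7_4_less[OF C1 q1 large]
            card_pow_6_le_card_T2_mult[OF q E]]) auto
    then show "1 / K * real q ^ 3 \<le> real (card (T2 q E))"
      using K by (simp add: field_simps)
  qed (use K in simp)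
qed

end
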